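(* Let $T\in\mathbb{R}^{n\times n\times n}$ with trilinear form $f(x,y,z)=\sum_{i,j,k}T_{ijk}x_iy_jz_k$ and $z$-slices $Z_1,\dots,Z_n$. Then $f$ can be written $f(x,y,z)=g(Ax,By,Cz)$ with $A,B\in M_n(\mathbb{R})$ orthogonal, $C\in M_n(\mathbb{R})$ arbitrary, and $g(x,y,z)=\sum_{i=1}^n\alpha_ix_iy_iz_i$ ($\alpha_i\in\mathbb{R}$), if and only if the matrices $Z_kZ_l^T$ and $Z_k^TZ_l$ are symmetric for all $k,l\in\{1,\dots,n\}$.
   Context: The $z$-slices of $T$ are the matrices $Z_k=(T_{ijk})_{1\le i,j\le n}$, i.e. the matrices of the bilinear forms $\partial f/\partial z_k$ in $(x,y)$. A real matrix $A$ is orthogonal if $A^TA=\mathrm{Id}$. *)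

theory Defs
  imports "HOL-Analysis.Analysis"
begin

definition trilinear_form :: "('n::finite \<Rightarrow> 'n \<Rightarrow> 'n \<Rightarrow> real) \<Rightarrow> real^'n \<Rightarrow> real^'n \<Rightarrow> real^'n \<Rightarrow> real" where
  "trilinear_form T x y z = (\<Sum>i\<in>UNIV. \<Sum>j\<in>UNIV. \<Sum>k\<in>UNIV. T i j k * x$i * y$j * z$k)"

definition diag_form :: "('n::finite \<Rightarrow> real) \<Rightarrow> real^'n \<Rightarrow> real^'n \<Rightarrow> real^'n \<Rightarrow> real" where
  "diag_form \<alpha> x y z = (\<Sum>i\<in>UNIV. \<alpha> i * x$i * y$i * z$i)"

definition zslice :: "('n::finite \<Rightarrow> 'n \<Rightarrow> 'n \<Rightarrow> real) \<Rightarrow> 'n \<Rightarrow> real^'n^'n" where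
  "zslice T k = (\<chi> i j. T i j k)"

definition symmetric_matrix :: "real^'n^'n \<Rightarrow> bool" where
  "symmetric_matrix M \<longleftrightarrow> transpose M = M"

end

theory Submission
  imports Defs
begin

text \<open>
  The symmetry conditions make the Gram matrices \<open>Z\<^sub>k\<^sup>T Z\<^sub>l\<close> symmetric and pairwise commuting, so
  they have a common unit eigenvector \<open>v\<close>. If some \<open>Z\<^sub>k v \<noteq> 0\<close>, then \<open>u = Z\<^sub>k v / |Z\<^sub>k v|\<close> and \<open>v\<close>
  are singular vectors shared by all slices: \<open>Z\<^sub>l v \<in> \<real>u\<close> and \<open>Z\<^sub>l\<^sup>T u \<in> \<real>v\<close> for every \<open>l\<close>
  (if all \<open>Z\<^sub>k v\<close> vanish, argue with the transposed slices instead). The orthogonal complements of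
  \<open>u\<close> and \<open>v\<close> are again mapped into each other by the slices, so induction on the dimension
  yields orthogonal \<open>A\<close>, \<open>B\<close> with all \<open>Z\<^sub>k = A\<^sup>T D\<^sub>k B\<close> for diagonal \<open>D\<^sub>k\<close>; the diagonal entries
  of the \<open>D\<^sub>k\<close> form the matrix \<open>C\<close>. Conversely such a factorisation gives
  \<open>Z\<^sub>k Z\<^sub>l\<^sup>T = A\<^sup>T D\<^sub>k D\<^sub>l A\<close> and \<open>Z\<^sub>k\<^sup>T Z\<^sub>l = B\<^sup>T D\<^sub>k D\<^sub>l B\<close>, which are symmetric.
\<close>

lemma quadratic_nonpos_imp_linear_coeff_eq_0:
  fixes b c :: real
  assumes "\<And>t. 2 * t * b + t\<^sup>2 * c \<le> 0"
  shows "b = 0"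
proof -
  define K where "K = \<bar>c\<bar> + 1"
  have "K > 0" and "2 * K + c > 0"
    unfolding K_def by (simp_all add: abs_if)
  have "2 * (b / K) * b + (b / K)\<^sup>2 * c = b\<^sup>2 * (2 * K + c) / K\<^sup>2"
    using \<open>K > 0\<close> by (simp add: field_simps power2_eq_square)
  with assms[of "b / K"] have "b\<^sup>2 * (2 * K + c) / K\<^sup>2 \<le> 0"
    by simp
  with \<open>K > 0\<close> \<open>2 * K + c > 0\<close> have "b\<^sup>2 \<le> 0"
    by (simp add: divide_le_0_iff mult_le_0_iff)
  then show ?thesis
    by simp
qed

lemma rayleigh_maximizer_is_eigenvector:
  fixes M :: "'a::euclidean_space \<Rightarrow> 'a"
  assumes lin: "linear M" and sym: "\<And>x y. x \<bullet> M y = M x \<bullet> y"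
    and W: "subspace W" and inv: "\<And>x. x \<in> W \<Longrightarrow> M x \<in> W"
    and w: "w \<in> W" "norm w = 1"
    and max: "\<And>x. x \<in> W \<Longrightarrow> x \<bullet> M x \<le> (w \<bullet> M w) * (x \<bullet> x)"
  shows "M w = (w \<bullet> M w) *\<^sub>R w"
proof -
  define c where "c = w \<bullet> M w"
  define h where "h = M w - c *\<^sub>R w"
  have "h \<in> W"
    unfolding h_def using w inv W by (simp add: subspace_diff subspace_scale)
  have ww: "w \<bullet> w = 1"
    using w by (simp add: dot_square_norm)
  have hh: "h \<bullet> h = h \<bullet> M w - c * (h \<bullet> w)"
    unfolding h_def by (simp add: inner_diff_left inner_diff_right algebra_simps)
  \<comment> \<open>perturbing the maximizer along \<open>h\<close> must not increase the Rayleigh quotient\<close>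
  have "2 * t * (h \<bullet> h) + t\<^sup>2 * (h \<bullet> M h - c * (h \<bullet> h)) \<le> 0" for t
  proof -
    have "w + t *\<^sub>R h \<in> W"
      using w \<open>h \<in> W\<close> W by (simp add: subspace_add subspace_scale)
    then have le: "(w + t *\<^sub>R h) \<bullet> M (w + t *\<^sub>R h) \<le> c * ((w + t *\<^sub>R h) \<bullet> (w + t *\<^sub>R h))"
      unfolding c_def by (rule max)
    have "(w + t *\<^sub>R h) \<bullet> M (w + t *\<^sub>R h) = c + 2 * t * (h \<bullet> M w) + t\<^sup>2 * (h \<bullet> M h)"
      using sym[of h w] c_def
      by (simp add: linear_add[OF lin] linear_scale[OF lin] inner_add_left inner_add_right
          inner_commute[of w "M h"] power2_eq_square algebra_simps)
    moreover have "(w + t *\<^sub>R h) \<bullet> (w + t *\<^sub>R h) = 1 + 2 * t * (h \<bullet> w) + t\<^sup>2 * (h \<bullet> h)"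
      using ww by (simp add: inner_add_left inner_add_right inner_commute[of w h]
          power2_eq_square algebra_simps)
    ultimately have "c + 2 * t * (h \<bullet> M w) + t\<^sup>2 * (h \<bullet> M h) \<le> c * (1 + 2 * t * (h \<bullet> w) + t\<^sup>2 * (h \<bullet> h))"
      using le by simp
    moreover have "2 * t * (h \<bullet> h) + t\<^sup>2 * (h \<bullet> M h - c * (h \<bullet> h))
        = (c + 2 * t * (h \<bullet> M w) + t\<^sup>2 * (h \<bullet> M h)) - c * (1 + 2 * t * (h \<bullet> w) + t\<^sup>2 * (h \<bullet> h))"
      by (simp add: hh algebra_simps)
    ultimately show ?thesis
      by linarith
  qed
  then have "h \<bullet> h = 0"
    by (rule quadratic_nonpos_imp_linear_coeff_eq_0)
  then show ?thesis
    unfolding h_def c_def by simp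
qed

lemma selfadjoint_has_eigenvector_in_invariant_subspace:
  fixes M :: "'a::euclidean_space \<Rightarrow> 'a"
  assumes lin: "linear M" and sym: "\<And>x y. x \<bullet> M y = M x \<bullet> y"
    and W: "subspace W" "W \<noteq> {0}" and inv: "\<And>x. x \<in> W \<Longrightarrow> M x \<in> W"
  obtains w c where "w \<in> W" "norm w = 1" "M w = c *\<^sub>R w"
proof -
  let ?S = "W \<inter> sphere 0 1"
  obtain x0 where x0: "x0 \<in> W" "x0 \<noteq> 0"
    using W subspace_0[OF W(1)] by auto
  then have "x0 /\<^sub>R norm x0 \<in> ?S"
    using W(1) by (simp add: subspace_scale)
  moreover have "compact ?S"
    using W(1) by (simp add: closed_subspace closed_Int_compact)
  moreover have "continuous_on ?S (\<lambda>x. x \<bullet> M x)"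
    using lin by (intro continuous_intros linear_continuous_on) (simp add: linear_conv_bounded_linear)
  ultimately obtain w where w: "w \<in> ?S" and wmax: "\<And>y. y \<in> ?S \<Longrightarrow> y \<bullet> M y \<le> w \<bullet> M w"
    using continuous_attains_sup by (metis empty_iff)
  have "x \<bullet> M x \<le> (w \<bullet> M w) * (x \<bullet> x)" if "x \<in> W" for x
  proof (cases "x = 0")
    case True
    then show ?thesis
      by (simp add: linear_0[OF lin])
  next
    case False
    then have "x /\<^sub>R norm x \<in> ?S"
      using that W(1) by (simp add: subspace_scale)
    then have "(x /\<^sub>R norm x) \<bullet> M (x /\<^sub>R norm x) \<le> w \<bullet> M w"
      by (rule wmax)
    then have "(x \<bullet> M x) / (norm x)\<^sup>2 \<le> w \<bullet> M w"
      by (simp add: linear_scale[OF lin] power2_eq_square divide_inverse mult_ac)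
    with False show ?thesis
      by (simp add: divide_le_eq power2_norm_eq_inner mult.commute)
  qed
  with w have "M w = (w \<bullet> M w) *\<^sub>R w"
    by (intro rayleigh_maximizer_is_eigenvector[OF lin sym W(1) inv]) auto
  with w show ?thesis
    using that by auto
qed

lemma commuting_selfadjoint_common_eigenvector:
  fixes M :: "'i \<Rightarrow> 'a::euclidean_space \<Rightarrow> 'a"
  assumes lin: "\<And>i. linear (M i)" and sym: "\<And>i x y. x \<bullet> M i y = M i x \<bullet> y"
    and comm: "\<And>i j x. M i (M j x) = M j (M i x)"
    and V: "subspace V" "V \<noteq> {0}" and inv: "\<And>i x. x \<in> V \<Longrightarrow> M i x \<in> V"
  obtains v where "v \<in> V" "norm v = 1" "\<And>i. \<exists>c. M i v = c *\<^sub>R v"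
proof -
  define invariant where
    "invariant W \<longleftrightarrow> subspace W \<and> W \<subseteq> V \<and> W \<noteq> {0} \<and> (\<forall>i. \<forall>x\<in>W. M i x \<in> W)" for W
  have "invariant V"
    using V inv unfolding invariant_def by auto
  then obtain W where W: "invariant W" and min: "\<And>W'. invariant W' \<Longrightarrow> dim W \<le> dim W'"
    using ex_has_least_nat[of invariant V dim] by blast
  then have sW: "subspace W" and "W \<subseteq> V" and nz: "W \<noteq> {0}" and iW: "\<And>i x. x \<in> W \<Longrightarrow> M i x \<in> W"
    unfolding invariant_def by auto
  \<comment> \<open>an eigenspace of \<open>M i\<close> inside \<open>W\<close> is invariant under all \<open>M j\<close>, so by minimality it is \<open>W\<close>\<close>
  have "\<exists>c. \<forall>x\<in>W. M i x = c *\<^sub>R x" for i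
  proof -
    obtain w c where w: "w \<in> W" "norm w = 1" and wc: "M i w = c *\<^sub>R w"
      using selfadjoint_has_eigenvector_in_invariant_subspace[OF lin sym sW nz iW] .
    define E where "E = {x\<in>W. M i x = c *\<^sub>R x}"
    have sE: "subspace E"
      using sW unfolding E_def subspace_def
      by (auto simp: linear_add[OF lin] linear_scale[OF lin] linear_0[OF lin] scaleR_add_right)
    have "invariant E"
      unfolding invariant_def
    proof (intro conjI allI ballI)
      show "E \<subseteq> V"
        using \<open>W \<subseteq> V\<close> unfolding E_def by auto
      have "w \<in> E" "w \<noteq> 0"
        using w wc unfolding E_def by auto
      then show "E \<noteq> {0}"
        by blast
      show "M j x \<in> E" if "x \<in> E" for j x
        using that iW comm[of i j x] unfolding E_def by (auto simp: linear_scale[OF lin])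
    qed (rule sE)
    then have "dim W \<le> dim E"
      by (rule min)
    moreover have "E \<subseteq> W"
      unfolding E_def by auto
    ultimately have "E = W"
      using subspace_dim_equal[OF sE sW] by blast
    then show ?thesis
      unfolding E_def by blast
  qed
  moreover obtain x0 where "x0 \<in> W" "x0 \<noteq> 0"
    using nz subspace_0[OF sW] by auto
  moreover have "x0 /\<^sub>R norm x0 \<in> W"
    using \<open>x0 \<in> W\<close> sW by (simp add: subspace_scale)
  ultimately show ?thesis
    using that[of "x0 /\<^sub>R norm x0"] \<open>W \<subseteq> V\<close> by (metis norm_sgn sgn_div_norm subsetD)
qed

definition symmetric_products :: "('k \<Rightarrow> real^'n^'m) \<Rightarrow> bool" where
  "symmetric_products Z \<longleftrightarrow>
     (\<forall>k l. symmetric_matrix (Z k ** transpose (Z l)) \<and> symmetric_matrix (transpose (Z k) ** Z l))"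

lemma symmetric_productsD:
  assumes "symmetric_products Z"
  shows "Z l ** transpose (Z k) = Z k ** transpose (Z l)"
    and "transpose (Z l) ** Z k = transpose (Z k) ** Z l"
  using assms unfolding symmetric_products_def symmetric_matrix_def
  by (metis matrix_transpose_mul transpose_transpose)+

lemma symmetric_products_transpose:
  "symmetric_products (\<lambda>k. transpose (Z k)) \<longleftrightarrow> symmetric_products Z"
  unfolding symmetric_products_def by auto

lemma symmetric_products_swap_outer:
  assumes "symmetric_products Z"
  shows "Z a ** transpose (Z b) ** Z c = Z c ** transpose (Z b) ** Z a"
proof -
  note H = symmetric_productsD[OF assms]
  have "Z a ** transpose (Z b) ** Z c = Z a ** (transpose (Z c) ** Z b)"
    by (metis matrix_mul_assoc H(2))
  also have "\<dots> = Z c ** transpose (Z a) ** Z b"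
    by (metis matrix_mul_assoc H(1))
  also have "\<dots> = Z c ** transpose (Z b) ** Z a"
    by (metis matrix_mul_assoc H(2))
  finally show ?thesis .
qed

lemma symmetric_products_gram_commute:
  assumes "symmetric_products Z"
  shows "transpose (Z k) ** Z l ** (transpose (Z p) ** Z q) = transpose (Z p) ** Z q ** (transpose (Z k) ** Z l)"
proof -
  have "transpose (Z k) ** Z l ** (transpose (Z p) ** Z q) = transpose (Z k) ** Z l ** transpose (Z p) ** Z q"
    by (simp only: matrix_mul_assoc)
  also have "transpose (Z k) ** Z l ** transpose (Z p) = transpose (Z p) ** Z l ** transpose (Z k)"
    using symmetric_products_swap_outer[of "\<lambda>k. transpose (Z k)"] assms
    by (simp add: symmetric_products_transpose)
  also have "transpose (Z p) ** Z l ** transpose (Z k) ** Z q = transpose (Z p) ** (Z l ** transpose (Z k) ** Z q)"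
    by (simp only: matrix_mul_assoc)
  also have "Z l ** transpose (Z k) ** Z q = Z q ** transpose (Z k) ** Z l"
    by (rule symmetric_products_swap_outer[OF assms])
  also have "transpose (Z p) ** (Z q ** transpose (Z k) ** Z l) = transpose (Z p) ** Z q ** (transpose (Z k) ** Z l)"
    by (simp only: matrix_mul_assoc)
  finally show ?thesis .
qed

lemma symmetric_products_gram_eigenvector:
  fixes Z :: "'k \<Rightarrow> real^'n^'m"
  assumes Z: "symmetric_products Z" and V: "subspace V" "V \<noteq> {0}"
    and inv: "\<And>k l x. x \<in> V \<Longrightarrow> transpose (Z k) *v (Z l *v x) \<in> V"
  obtains v where "v \<in> V" "norm v = 1" "\<And>k l. \<exists>c. transpose (Z k) *v (Z l *v v) = c *\<^sub>R v"
proof -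
  define G where "G p = transpose (Z (fst p)) ** Z (snd p)" for p
  have "transpose (G p) = G p" for p
    using symmetric_productsD(2)[OF Z] by (simp add: G_def matrix_transpose_mul)
  then have sym: "x \<bullet> (G p *v y) = (G p *v x) \<bullet> y" for p x y
    by (metis dot_lmul_matrix transpose_matrix_vector)
  have comm: "G p *v (G q *v x) = G q *v (G p *v x)" for p q x
    unfolding G_def matrix_vector_mul_assoc by (simp add: symmetric_products_gram_commute[OF Z])
  have G_inv: "x \<in> V \<Longrightarrow> G p *v x \<in> V" for p x
    unfolding G_def matrix_vector_mul_assoc[symmetric] by (rule inv)
  obtain v where "v \<in> V" "norm v = 1" "\<And>p. \<exists>c. G p *v v = c *\<^sub>R v"
    using commuting_selfadjoint_common_eigenvector[of "\<lambda>p x. G p *v x" V,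
        OF matrix_vector_mul_linear sym comm V G_inv] by blast
  then show ?thesis
    using that unfolding G_def matrix_vector_mul_assoc by (metis fst_conv snd_conv)
qed

lemma inner_matrix_vector_transpose: "(x::real^'m) \<bullet> (A *v y) = (transpose A *v x) \<bullet> y"
  by (simp add: dot_lmul_matrix)

definition singular_pair :: "('k \<Rightarrow> real^'n^'m) \<Rightarrow> real^'m \<Rightarrow> real^'n \<Rightarrow> bool" where
  "singular_pair Z u v \<longleftrightarrow> norm u = 1 \<and> norm v = 1 \<and>
     (\<forall>k. Z k *v v \<in> span {u} \<and> transpose (Z k) *v u \<in> span {v})"

lemma singular_pair_transpose:
  "singular_pair (\<lambda>k. transpose (Z k)) v u \<longleftrightarrow> singular_pair Z u v"
  unfolding singular_pair_def by (auto simp del: transpose_matrix_vector)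

lemma singular_pair_orthogonal_image:
  assumes "singular_pair Z u v" "orthogonal v x"
  shows "orthogonal u (Z k *v x)"
proof -
  obtain c where "transpose (Z k) *v u = c *\<^sub>R v"
    using assms(1) unfolding singular_pair_def span_singleton by (auto simp del: transpose_matrix_vector)
  then show ?thesis
    using assms(2) unfolding orthogonal_def inner_matrix_vector_transpose
    by (simp del: transpose_matrix_vector)
qed

lemma singular_pair_orthogonal_transpose_image:
  assumes "singular_pair Z u v" "orthogonal u y"
  shows "orthogonal v (transpose (Z k) *v y)"
  using singular_pair_orthogonal_image[of "\<lambda>k. transpose (Z k)"] assms
  by (simp add: singular_pair_transpose del: transpose_matrix_vector)

lemma singular_pair_of_gram_eigenvector:
  fixes Z :: "'k \<Rightarrow> real^'n^'m"
  assumes Z: "symmetric_products Z" and v: "norm v = 1"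
    and eig: "\<And>k l. \<exists>c. transpose (Z k) *v (Z l *v v) = c *\<^sub>R v"
    and nz: "Z k0 *v v \<noteq> 0"
  shows "singular_pair Z (Z k0 *v v /\<^sub>R norm (Z k0 *v v)) v"
proof -
  define w where "w = Z k0 *v v"
  obtain c where c: "\<And>k l. transpose (Z k) *v (Z l *v v) = c k l *\<^sub>R v"
    using eig by metis
  have "c k0 k0 = w \<bullet> w"
  proof -
    have "w \<bullet> w = (transpose (Z k0) *v w) \<bullet> v"
      unfolding w_def by (rule inner_matrix_vector_transpose)
    also have "\<dots> = c k0 k0"
      using v unfolding w_def c by (simp add: dot_square_norm)
    finally show ?thesis ..
  qed
  then have "c k0 k0 \<noteq> 0"
    using nz unfolding w_def by simp
  \<comment> \<open>\<open>Z k Z k0\<^sup>T Z k0 = Z k0 Z k0\<^sup>T Z k\<close> turns the Gram eigenvalue equations into \<open>Z k v \<parallel> w\<close>\<close>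
  have parallel: "c k0 k0 *\<^sub>R (Z k *v v) = c k0 k *\<^sub>R w" for k
  proof -
    have "Z k *v (transpose (Z k0) *v (Z k0 *v v)) = Z k0 *v (transpose (Z k0) *v (Z k *v v))"
      using symmetric_products_swap_outer[OF Z, of k k0 k0]
      by (simp only: matrix_vector_mul_assoc matrix_mul_assoc)
    then show ?thesis
      unfolding c w_def by (simp only: matrix_vector_mult_scaleR)
  qed
  have "w = norm w *\<^sub>R (w /\<^sub>R norm w)"
    using nz unfolding w_def by simp
  then have "w \<in> span {w /\<^sub>R norm w}"
    by (metis span_base span_scale singletonI)
  moreover have "Z k *v v = (c k0 k / c k0 k0) *\<^sub>R w" for k
  proof -
    have "Z k *v v = inverse (c k0 k0) *\<^sub>R (c k0 k0 *\<^sub>R (Z k *v v))"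
      using \<open>c k0 k0 \<noteq> 0\<close> by simp
    then show ?thesis
      unfolding parallel by (simp add: field_simps)
  qed
  ultimately have "Z k *v v \<in> span {w /\<^sub>R norm w}" for k
    by (simp add: span_scale)
  moreover have "transpose (Z k) *v (w /\<^sub>R norm w) \<in> span {v}" for k
    unfolding w_def matrix_vector_mult_scaleR c by (simp add: span_scale span_base)
  ultimately show ?thesis
    using v nz unfolding singular_pair_def w_def by simp
qed

lemma singular_pair_exists:
  fixes Z :: "'k \<Rightarrow> real^'n^'m"
  assumes Z: "symmetric_products Z"
    and U: "subspace U" "U \<noteq> {0}" and V: "subspace V" "V \<noteq> {0}"
    and maps_V: "\<And>k x. x \<in> V \<Longrightarrow> Z k *v x \<in> U"
    and maps_U: "\<And>k y. y \<in> U \<Longrightarrow> transpose (Z k) *v y \<in> V"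
  obtains u v where "u \<in> U" "v \<in> V" "singular_pair Z u v"
proof -
  obtain v where v: "v \<in> V" "norm v = 1" and eig_v: "\<And>k l. \<exists>c. transpose (Z k) *v (Z l *v v) = c *\<^sub>R v"
    using symmetric_products_gram_eigenvector[OF Z V] maps_U maps_V by blast
  have Z': "symmetric_products (\<lambda>k. transpose (Z k))"
    using Z by (simp add: symmetric_products_transpose)
  obtain u where u: "u \<in> U" "norm u = 1" and eig_u: "\<And>k l. \<exists>c. Z k *v (transpose (Z l) *v u) = c *\<^sub>R u"
    using symmetric_products_gram_eigenvector[OF Z' U] maps_U maps_V
    by (metis transpose_transpose)
  consider k where "Z k *v v \<noteq> 0" | k where "transpose (Z k) *v u \<noteq> 0"
    | "\<And>k. Z k *v v = 0" "\<And>k. transpose (Z k) *v u = 0"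
    by blast
  then show ?thesis
  proof cases
    case 1
    have "Z k *v v /\<^sub>R norm (Z k *v v) \<in> U"
      using maps_V[OF v(1)] U(1) by (simp add: subspace_scale)
    with 1 show ?thesis
      using singular_pair_of_gram_eigenvector[OF Z v(2) eig_v] v(1) that by blast
  next
    case 2
    have "transpose (Z k) *v u /\<^sub>R norm (transpose (Z k) *v u) \<in> V"
      using maps_U[OF u(1)] V(1) by (simp add: subspace_scale del: transpose_matrix_vector)
    with 2 show ?thesis
      using singular_pair_of_gram_eigenvector[OF Z' u(2)] eig_u u(1) that
      by (simp add: singular_pair_transpose del: transpose_matrix_vector)
  next
    case 3
    then have "singular_pair Z u v"
      using u v by (simp add: singular_pair_def span_zero del: transpose_matrix_vector)
    with u v show ?thesis
      using that by blast
  qed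
qed

lemma dim_subspace_orthogonal_to_vector:
  fixes U :: "'a::euclidean_space set"
  assumes U: "subspace U" and u: "u \<in> U" "u \<noteq> 0"
  shows "subspace {x \<in> U. orthogonal u x}" and "dim U = Suc (dim {x \<in> U. orthogonal u x})"
proof -
  have eq: "{x \<in> U. \<forall>y \<in> span {u}. orthogonal y x} = {x \<in> U. orthogonal u x}"
    by (auto intro: span_base orthogonal_to_span simp: orthogonal_commute)
  show "subspace {x \<in> U. orthogonal u x}"
    using subspace_inter[OF U subspace_orthogonal_to_vector[of u]] by (simp add: Int_def)
  have "span {u} \<subseteq> U"
    using U u by (simp add: span_minimal)
  from dim_subspace_orthogonal_to_vectors[OF subspace_span U this]
  show "dim U = Suc (dim {x \<in> U. orthogonal u x})"
    using u by (simp add: eq)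
qed

definition orthonormal_on :: "'i set \<Rightarrow> ('i \<Rightarrow> 'a::real_inner) \<Rightarrow> bool" where
  "orthonormal_on I f \<longleftrightarrow> (\<forall>i\<in>I. norm (f i) = 1) \<and> (\<forall>i\<in>I. \<forall>j\<in>I. i \<noteq> j \<longrightarrow> orthogonal (f i) (f j))"

lemma symmetric_products_singular_bases:
  fixes Z :: "'k \<Rightarrow> real^'n^'m" and I :: "'i set"
  assumes Z: "symmetric_products Z" and "finite I"
    and "subspace U" "subspace V" "dim U = card I" "dim V = card I"
    and "\<And>k x. x \<in> V \<Longrightarrow> Z k *v x \<in> U"
    and "\<And>k y. y \<in> U \<Longrightarrow> transpose (Z k) *v y \<in> V"
  shows "\<exists>f g. (\<forall>i\<in>I. f i \<in> U \<and> g i \<in> V) \<and> orthonormal_on I f \<and> orthonormal_on I g \<and>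
           (\<forall>k. \<forall>i\<in>I. \<forall>j\<in>I. i \<noteq> j \<longrightarrow> orthogonal (f i) (Z k *v g j))"
  using assms(2-)
proof (induction I arbitrary: U V rule: finite_induct)
  case empty
  show ?case
    by (simp add: orthonormal_on_def)
next
  case (insert a I)
  have "U \<noteq> {0}" "V \<noteq> {0}"
    using insert.prems(3,4) insert.hyps by (auto simp: dim_eq_0)
  then obtain u v where "u \<in> U" "v \<in> V" and uv: "singular_pair Z u v"
    using singular_pair_exists[OF Z insert.prems(1) _ insert.prems(2) _ insert.prems(5,6)] by blast
  then have "u \<noteq> 0" "v \<noteq> 0" "norm u = 1" "norm v = 1"
    unfolding singular_pair_def by auto
  define U' where "U' = {x \<in> U. orthogonal u x}"
  define V' where "V' = {x \<in> V. orthogonal v x}"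
  note U' = dim_subspace_orthogonal_to_vector[OF insert.prems(1) \<open>u \<in> U\<close> \<open>u \<noteq> 0\<close>, folded U'_def]
  note V' = dim_subspace_orthogonal_to_vector[OF insert.prems(2) \<open>v \<in> V\<close> \<open>v \<noteq> 0\<close>, folded V'_def]
  have "Z k *v x \<in> U'" if "x \<in> V'" for k x
    using that insert.prems(5) singular_pair_orthogonal_image[OF uv] unfolding U'_def V'_def by blast
  moreover have "transpose (Z k) *v y \<in> V'" if "y \<in> U'" for k y
    using that insert.prems(6) singular_pair_orthogonal_transpose_image[OF uv]
    unfolding U'_def V'_def by blast
  ultimately obtain f g where fg: "\<forall>i\<in>I. f i \<in> U' \<and> g i \<in> V'" "orthonormal_on I f" "orthonormal_on I g"
    and cross: "\<forall>k. \<forall>i\<in>I. \<forall>j\<in>I. i \<noteq> j \<longrightarrow> orthogonal (f i) (Z k *v g j)"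
    using insert.IH[OF U'(1) V'(1)] U'(2) V'(2) insert.prems(3,4) insert.hyps by auto
  have "orthogonal (f i) (Z k *v v)" if "i \<in> I" for i k
    using uv fg(1) that unfolding singular_pair_def U'_def
    by (metis (mono_tags) mem_Collect_eq orthogonal_commute orthogonal_to_span singletonD)
  moreover have "orthogonal u (Z k *v g j)" if "j \<in> I" for j k
    using singular_pair_orthogonal_image[OF uv] fg(1) that unfolding V'_def by blast
  ultimately show ?case
    using fg cross \<open>u \<in> U\<close> \<open>v \<in> V\<close> \<open>norm u = 1\<close> \<open>norm v = 1\<close> insert.hyps
    unfolding orthonormal_on_def U'_def V'_def
    by (intro exI[of _ "f(a := u)"] exI[of _ "g(a := v)"]) (auto simp: orthogonal_commute)
qed

definition diag_matrix :: "('n::finite \<Rightarrow> real) \<Rightarrow> real^'n^'n" where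
  "diag_matrix d = (\<chi> i j. if i = j then d i else 0)"

lemma transpose_diag_matrix [simp]: "transpose (diag_matrix d) = diag_matrix d"
  by (simp add: diag_matrix_def transpose_def vec_eq_iff)

lemma diag_matrix_mult: "diag_matrix (d :: 'n::finite \<Rightarrow> real) ** diag_matrix e = diag_matrix (\<lambda>i. d i * e i)"
proof -
  have "(\<Sum>k\<in>UNIV. (if i = k then d i else 0) * (if k = j then e k else 0)) = (if i = j then d i * e i else 0)"
    for i j :: 'n
    by (simp add: if_distrib[of "\<lambda>x. x * _"] cong: if_cong)
  then show ?thesis
    by (simp add: diag_matrix_def matrix_matrix_mult_def vec_eq_iff)
qed

lemma diag_matrix_diagonal:
  assumes "\<And>i j. i \<noteq> j \<Longrightarrow> M $ i $ j = 0"
  shows "diag_matrix (\<lambda>i. M $ i $ i) = M"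
  using assms by (auto simp: diag_matrix_def vec_eq_iff)

lemma inner_diag_matrix: "x \<bullet> (diag_matrix d *v y) = (\<Sum>i\<in>UNIV. d i * x $ i * y $ i)"
proof -
  have "(diag_matrix d *v y) $ i = d i * y $ i" for i
    by (simp add: diag_matrix_def matrix_vector_mult_def if_distrib[of "\<lambda>x. x * _"] cong: if_cong)
  then show ?thesis
    by (simp add: inner_vec_def mult_ac)
qed

lemma matrix_mult_transpose_entry:
  fixes A :: "real^'m^'p" and M :: "real^'n^'m" and B :: "real^'n^'q"
  shows "(A ** M ** transpose B) $ i $ j = row i A \<bullet> (M *v row j B)"
proof -
  have "(M ** transpose B) $ p $ j = (M *v row j B) $ p" for p
    by (simp add: matrix_matrix_mult_def matrix_vector_mult_def transpose_def row_def mult.commute)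
  then show ?thesis
    unfolding matrix_mul_assoc[symmetric] by (simp add: matrix_matrix_mult_def inner_vec_def row_def)
qed

lemma simultaneous_singular_value_decomposition:
  fixes Z :: "'k \<Rightarrow> real^'n^'n"
  assumes "symmetric_products Z"
  obtains A B d where "orthogonal_matrix A" "orthogonal_matrix B"
    "\<And>k. Z k = transpose A ** diag_matrix (d k) ** B"
proof -
  have dim: "dim (UNIV :: (real^'n) set) = card (UNIV :: 'n set)"
    by (simp add: dim_UNIV)
  obtain f g :: "'n \<Rightarrow> real^'n" where "orthonormal_on UNIV f" "orthonormal_on UNIV g"
    and cross: "\<And>k i j. i \<noteq> j \<Longrightarrow> orthogonal (f i) (Z k *v g j)"
    using symmetric_products_singular_bases[OF assms finite_class.finite_UNIV subspace_UNIV subspace_UNIV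
        dim dim UNIV_I UNIV_I] by blast
  define A :: "real^'n^'n" where "A = (\<chi> i. f i)"
  define B :: "real^'n^'n" where "B = (\<chi> i. g i)"
  have rows: "row i A = f i" "row i B = g i" for i
    unfolding A_def B_def row_def by (simp_all add: vec_lambda_eta)
  have A: "orthogonal_matrix A" and B: "orthogonal_matrix B"
    using \<open>orthonormal_on UNIV f\<close> \<open>orthonormal_on UNIV g\<close>
    by (simp_all add: orthogonal_matrix_orthonormal_rows orthonormal_on_def rows)
  have "(A ** Z k ** transpose B) $ i $ j = 0" if "i \<noteq> j" for k i j
    using cross[OF that] by (simp add: matrix_mult_transpose_entry rows orthogonal_def)
  then have "A ** Z k ** transpose B = diag_matrix (\<lambda>i. (A ** Z k ** transpose B) $ i $ i)" for k
    by (simp add: diag_matrix_diagonal)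
  then have "Z k = transpose A ** diag_matrix (\<lambda>i. (A ** Z k ** transpose B) $ i $ i) ** B" for k
    using A B unfolding orthogonal_matrix_def by (metis matrix_mul_assoc matrix_mul_lid matrix_mul_rid)
  then show ?thesis
    by (rule that[OF A B])
qed

lemma trilinear_form_zslice:
  "trilinear_form T x y z = (\<Sum>k\<in>UNIV. z $ k * (x \<bullet> (zslice T k *v y)))"
proof -
  have "(\<Sum>k\<in>UNIV. z $ k * (x \<bullet> (zslice T k *v y))) = (\<Sum>k\<in>UNIV. \<Sum>i\<in>UNIV. \<Sum>j\<in>UNIV. T i j k * x$i * y$j * z$k)"
    by (simp add: zslice_def inner_vec_def matrix_vector_mult_def sum_distrib_left sum_distrib_right mult_ac)
  also have "\<dots> = (\<Sum>i\<in>UNIV. \<Sum>k\<in>UNIV. \<Sum>j\<in>UNIV. T i j k * x$i * y$j * z$k)"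
    by (rule sum.swap)
  also have "\<dots> = (\<Sum>i\<in>UNIV. \<Sum>j\<in>UNIV. \<Sum>k\<in>UNIV. T i j k * x$i * y$j * z$k)"
    by (rule sum.cong[OF refl], rule sum.swap)
  finally show ?thesis
    unfolding trilinear_form_def by simp
qed

lemma trilinear_form_axis: "trilinear_form T (axis i 1) (axis j 1) (axis k 1) = T i j k"
proof -
  have "(\<Sum>c\<in>UNIV. axis k 1 $ c * f c) = (\<Sum>c\<in>UNIV. if c = k then f c else 0)" for f :: "_ \<Rightarrow> real"
    by (rule sum.cong) (auto simp: axis_def)
  then show ?thesis
    by (simp add: trilinear_form_zslice inner_axis' matrix_vector_mult_basis zslice_def column_def)
qed

lemma diag_form_eq_trilinear_form:
  "diag_form \<alpha> (A *v x) (B *v y) (C *v z) =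
     trilinear_form (\<lambda>i j k. (transpose A ** diag_matrix (\<lambda>p. \<alpha> p * C $ p $ k) ** B) $ i $ j) x y z"
proof -
  have "x \<bullet> ((transpose A ** diag_matrix (\<lambda>p. \<alpha> p * C $ p $ k) ** B) *v y)
      = (\<Sum>p\<in>UNIV. \<alpha> p * C $ p $ k * (A *v x) $ p * (B *v y) $ p)" for k
    by (simp add: inner_matrix_vector_transpose[of x] matrix_vector_mul_assoc[symmetric] inner_diag_matrix
        del: transpose_matrix_vector)
  then have "trilinear_form (\<lambda>i j k. (transpose A ** diag_matrix (\<lambda>p. \<alpha> p * C $ p $ k) ** B) $ i $ j) x y z
      = (\<Sum>k\<in>UNIV. \<Sum>p\<in>UNIV. z $ k * (\<alpha> p * C $ p $ k * (A *v x) $ p * (B *v y) $ p))"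
    by (simp add: trilinear_form_zslice zslice_def vec_lambda_eta sum_distrib_left)
  also have "\<dots> = (\<Sum>p\<in>UNIV. \<Sum>k\<in>UNIV. z $ k * (\<alpha> p * C $ p $ k * (A *v x) $ p * (B *v y) $ p))"
    by (rule sum.swap)
  also have "\<dots> = diag_form \<alpha> (A *v x) (B *v y) (C *v z)"
  proof -
    have "(C *v z) $ p = (\<Sum>k\<in>UNIV. C $ p $ k * z $ k)" for p
      by (simp add: matrix_vector_mult_def)
    then show ?thesis
      by (simp add: diag_form_def sum_distrib_left mult_ac)
  qed
  finally show ?thesis ..
qed

lemma symmetric_products_orthogonal_diag:
  fixes A B :: "real^'n^'n"
  assumes A: "orthogonal_matrix A" and B: "orthogonal_matrix B"
  shows "symmetric_products (\<lambda>k. transpose A ** diag_matrix (d k) ** B)"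
proof -
  have AAt: "X ** A ** transpose A = X" and BBt: "X ** B ** transpose B = X" for X :: "real^'n^'n"
    using A B unfolding orthogonal_matrix_def by (metis matrix_mul_assoc matrix_mul_rid)+
  have diag: "X ** diag_matrix e ** diag_matrix e' = X ** diag_matrix (\<lambda>i. e i * e' i)" for X :: "real^'n^'n" and e e'
    by (simp add: matrix_mul_assoc[symmetric] diag_matrix_mult)
  have congruence: "symmetric_matrix (transpose M ** diag_matrix e ** M)" for M :: "real^'n^'n" and e
    unfolding symmetric_matrix_def by (simp add: matrix_transpose_mul matrix_mul_assoc)
  show ?thesis
    unfolding symmetric_products_def
    by (simp add: matrix_transpose_mul matrix_mul_assoc AAt BBt diag congruence)
qed

lemma trilinear_form_eq_diag_form_iff:
  "(\<forall>x y z. trilinear_form T x y z = diag_form \<alpha> (A *v x) (B *v y) (C *v z)) \<longleftrightarrow>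
     (\<forall>k. zslice T k = transpose A ** diag_matrix (\<lambda>p. \<alpha> p * C $ p $ k) ** B)"
proof
  assume eq: "\<forall>x y z. trilinear_form T x y z = diag_form \<alpha> (A *v x) (B *v y) (C *v z)"
  have "T i j k = (transpose A ** diag_matrix (\<lambda>p. \<alpha> p * C $ p $ k) ** B) $ i $ j" for i j k
    using eq[rule_format, of "axis i 1" "axis j 1" "axis k 1"]
    by (simp add: diag_form_eq_trilinear_form trilinear_form_axis)
  then show "\<forall>k. zslice T k = transpose A ** diag_matrix (\<lambda>p. \<alpha> p * C $ p $ k) ** B"
    by (simp add: zslice_def vec_eq_iff)
next
  assume "\<forall>k. zslice T k = transpose A ** diag_matrix (\<lambda>p. \<alpha> p * C $ p $ k) ** B"
  then have "T = (\<lambda>i j k. (transpose A ** diag_matrix (\<lambda>p. \<alpha> p * C $ p $ k) ** B) $ i $ j)"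
    by (simp add: zslice_def vec_eq_iff fun_eq_iff)
  then show "\<forall>x y z. trilinear_form T x y z = diag_form \<alpha> (A *v x) (B *v y) (C *v z)"
    by (simp add: diag_form_eq_trilinear_form)
qed

theorem proposition34:
  fixes T :: "'n::finite \<Rightarrow> 'n \<Rightarrow> 'n \<Rightarrow> real"
  shows "(\<exists>(A::real^'n^'n) (B::real^'n^'n) (C::real^'n^'n) (\<alpha>::'n \<Rightarrow> real).
            orthogonal_matrix A \<and> orthogonal_matrix B \<and>
            (\<forall>x y z. trilinear_form T x y z = diag_form \<alpha> (A *v x) (B *v y) (C *v z)))
     \<longleftrightarrow> (\<forall>k l. symmetric_matrix (zslice T k ** transpose (zslice T l)) \<and>
                symmetric_matrix (transpose (zslice T k) ** zslice T l))"
  (is "?decomposable \<longleftrightarrow> ?symmetric")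
proof
  assume ?decomposable
  then obtain A B C \<alpha> where "orthogonal_matrix A" "orthogonal_matrix B"
    and "\<forall>k. zslice T k = transpose A ** diag_matrix (\<lambda>p. \<alpha> p * C $ p $ k) ** B"
    unfolding trilinear_form_eq_diag_form_iff by blast
  then show ?symmetric
    using symmetric_products_orthogonal_diag[of A B] unfolding symmetric_products_def by simp
next
  assume ?symmetric
  then obtain A B d where A: "orthogonal_matrix A" and B: "orthogonal_matrix B"
    and Z: "\<And>k. zslice T k = transpose A ** diag_matrix (d k) ** B"
    using simultaneous_singular_value_decomposition[of "zslice T"] unfolding symmetric_products_def by blast
  define C :: "real^'n^'n" where "C = (\<chi> p k. d k p)"
  have "\<forall>x y z. trilinear_form T x y z = diag_form (\<lambda>_. 1) (A *v x) (B *v y) (C *v z)"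
    unfolding trilinear_form_eq_diag_form_iff by (simp add: Z C_def)
  with A B show ?decomposable
    by blast
qed

end
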